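(* Let $(\Gamma,\rho)$ be a voltage graph with $\Gamma=(V,E)$ a rooted simple digraph on vertices $V=\{v_1,\dots,v_N\}$ and voltage group $G$ a point group in dimension $k$ (a finite subgroup of $\mathrm{O}(k)$). Write $\theta_{ij}:=\rho(e_{ij})$ for $e_{ij}\in E$, and let $a_{ij}>0$ be positive constants. Consider the $G$-clustering dynamics on $p=(x_1,\dots,x_N)\in\mathbb{R}^{kN}$, $x_i\in\mathbb{R}^k$: $$\dot x_i=\sum_{v_j\in\mathcal{N}^-(v_i)}a_{ij}\,(\theta_{ij}x_j-x_i),\qquad i=1,\dots,N.$$ Let $\{G_i\}_{v_i\in V}$ be the local groups and $\{G_i^*\}_{v_i\in V}$ the directed local groups of $(\Gamma,\rho)$. Suppose that $G_i=G_i^*$ for some (and hence any) root $v_i$ of $\Gamma$. Then for any initial condition $p(0)\in\mathbb{R}^{kN}$, the trajectory $p(t)$ converges exponentially fast to a configuration $p^*=(x_1^*,\dots,x_N^* )$ satisfying: (1) for each edge $e_{ij}\in E$, $x_i^*=\theta_{ij}x_j^*$; in particular $\|x_1^*\|=\dots=\|x_N^*\|$; (2) for each $v_i\in V$, $\theta x_i^*=x_i^*$ for all $\theta\in G_i$.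
   Context: Digraphs are simple (no self-loops, no multiple edges); $e_{ij}$ denotes the edge $v_i\to v_j$. $\mathcal{N}^-(v_i)=\{v_j: e_{ij}\in E\}$ is the set of out-neighbors of $v_i$. A voltage graph is a pair $(\Gamma,\rho)$ with $\rho:E\to G$, $G$ a finite group with identity $\mathbf{1}$. A semi-walk is an alternating sequence $w=v_{i_1}a_1v_{i_2}\dots a_{n-1}v_{i_n}$ ($n\ge1$) where each $a_j$ is either $e_{i_ji_{j+1}}$ or $e_{i_{j+1}i_j}$; it goes from $v_{i_1}$ to $v_{i_n}$, is closed if $v_{i_1}=v_{i_n}$, and is a walk if every $a_j=e_{i_ji_{j+1}}$. A path is a walk with pairwise distinct vertices. The net voltage is $f(w)=\bar\rho(a_1)\cdots\bar\rho(a_{n-1})$ with $\bar\rho(a_j)=\rho(a_j)$ if $a_j=e_{i_ji_{j+1}}$ and $\bar\rho(a_j)=\rho(a_j)^{-1}$ otherwise ($f=\mathbf{1}$ for the one-vertex semi-walk). The local group at $v_i$ is $G_i=\{f(w): w$ a closed semi-walk starting and ending at $v_i\}$; the directed local group is $G_i^*=\{f(w): w$ a closed walk starting and ending at $v_i\}$. $\Gamma$ is rooted if there is a vertex $v_r$ (a root) such that every vertex has a path to $v_r$. *)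

theory Defs
  imports "HOL-Analysis.Analysis"
begin

text \<open>Vertices are the elements of a finite type 'v; the edge set is a relation
  E on 'v (a pair (i,j) stands for the edge e_ij : v_i -> v_j), so multiple edges
  are impossible; simplicity additionally requires irreflexivity.\<close>

definition simple_digraph :: "('v \<times> 'v) set \<Rightarrow> bool" where
  "simple_digraph E \<longleftrightarrow> (\<forall>i. (i, i) \<notin> E)"

definition point_group :: "(real^'k^'k) set \<Rightarrow> bool" where
  "point_group G \<longleftrightarrow> finite G \<and> (\<forall>g\<in>G. orthogonal_matrix g) \<and> mat 1 \<in> G
     \<and> (\<forall>g\<in>G. \<forall>h\<in>G. g ** h \<in> G) \<and> (\<forall>g\<in>G. matrix_inv g \<in> G)"

definition voltage_graph :: "('v \<times> 'v) set \<Rightarrow> (real^'k^'k) set \<Rightarrow> ('v \<times> 'v \<Rightarrow> real^'k^'k) \<Rightarrow> bool" where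
  "voltage_graph E G \<rho> \<longleftrightarrow> simple_digraph E \<and> point_group G \<and> (\<forall>e\<in>E. \<rho> e \<in> G)"

inductive semiwalk_volt :: "('v \<times> 'v) set \<Rightarrow> ('v \<times> 'v \<Rightarrow> real^'k^'k) \<Rightarrow> 'v \<Rightarrow> 'v \<Rightarrow> real^'k^'k \<Rightarrow> bool"
  for E \<rho> where
  sw_nil: "semiwalk_volt E \<rho> i i (mat 1)"
| sw_fwd: "semiwalk_volt E \<rho> i j g \<Longrightarrow> (j, l) \<in> E \<Longrightarrow> semiwalk_volt E \<rho> i l (g ** \<rho> (j, l))"
| sw_bwd: "semiwalk_volt E \<rho> i j g \<Longrightarrow> (l, j) \<in> E \<Longrightarrow> semiwalk_volt E \<rho> i l (g ** matrix_inv (\<rho> (l, j)))"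

inductive walk_volt :: "('v \<times> 'v) set \<Rightarrow> ('v \<times> 'v \<Rightarrow> real^'k^'k) \<Rightarrow> 'v \<Rightarrow> 'v \<Rightarrow> real^'k^'k \<Rightarrow> bool"
  for E \<rho> where
  w_nil: "walk_volt E \<rho> i i (mat 1)"
| w_fwd: "walk_volt E \<rho> i j g \<Longrightarrow> (j, l) \<in> E \<Longrightarrow> walk_volt E \<rho> i l (g ** \<rho> (j, l))"

definition local_group :: "('v \<times> 'v) set \<Rightarrow> ('v \<times> 'v \<Rightarrow> real^'k^'k) \<Rightarrow> 'v \<Rightarrow> (real^'k^'k) set" where
  "local_group E \<rho> i = {g. semiwalk_volt E \<rho> i i g}"

definition dir_local_group :: "('v \<times> 'v) set \<Rightarrow> ('v \<times> 'v \<Rightarrow> real^'k^'k) \<Rightarrow> 'v \<Rightarrow> (real^'k^'k) set" where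
  "dir_local_group E \<rho> i = {g. walk_volt E \<rho> i i g}"

definition has_path :: "('v \<times> 'v) set \<Rightarrow> 'v \<Rightarrow> 'v \<Rightarrow> bool" where
  "has_path E u w \<longleftrightarrow> (\<exists>vs. vs \<noteq> [] \<and> distinct vs \<and> hd vs = u \<and> last vs = w
      \<and> (\<forall>n. Suc n < length vs \<longrightarrow> (vs ! n, vs ! Suc n) \<in> E))"

definition is_root :: "('v \<times> 'v) set \<Rightarrow> 'v \<Rightarrow> bool" where
  "is_root E r \<longleftrightarrow> (\<forall>v. has_path E v r)"

definition rooted :: "('v \<times> 'v) set \<Rightarrow> bool" where
  "rooted E \<longleftrightarrow> (\<exists>r. is_root E r)"

definition clustering_field :: "('v \<times> 'v) set \<Rightarrow> ('v \<times> 'v \<Rightarrow> real^'k^'k) \<Rightarrow> ('v \<Rightarrow> 'v \<Rightarrow> real)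
     \<Rightarrow> (real^'k)^'v \<Rightarrow> (real^'k)^'v" where
  "clustering_field E \<rho> a p = (\<chi> i. \<Sum>j\<in>{j. (i, j) \<in> E}. a i j *\<^sub>R (\<rho> (i, j) *v (p $ j) - p $ i))"

end

theory Submission
  imports Defs
begin

text \<open>Lift the dynamics to the graph whose nodes are the pairs (v, w) with w the net voltage of a
  walk from v to the root r. The coordinates transpose w *v x_v evolve by scalar consensus along the
  lifted arcs, and the lifted node set is closed under these arcs precisely because G_r = G_r^*:
  a semi-walk followed by a walk to r can be rerouted into a walk to r. Every lifted node reaches
  (r, 1), so scalar consensus converges exponentially: upper and lower bounds persist, and a
  deficit at the root spreads to every node within a bounded time, shrinking the range by a fixed
  factor. Rotating back, x_v converges to w *v z for a vector z; this limit does not depend on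
  the walk w, so it is compatible with every edge voltage and fixed by every local group.\<close>

section \<open>Differential inequalities and exponential bounds\<close>

lemma DERIV_halfline_nonneg_imp_le:
  fixes h h' :: "real \<Rightarrow> real"
  assumes deriv: "\<And>t. t \<ge> 0 \<Longrightarrow> (h has_real_derivative h' t) (at t within {0..})"
    and nonneg: "\<And>t. t0 \<le> t \<Longrightarrow> t \<le> t1 \<Longrightarrow> h' t \<ge> 0"
    and "0 \<le> t0" "t0 \<le> t1"
  shows "h t0 \<le> h t1"
proof (rule DERIV_nonneg_imp_increasing_open[OF \<open>t0 \<le> t1\<close>])
  fix x assume "t0 < x" "x < t1"
  moreover have "at x within {0..} = at x" if "x > 0"
    by (rule at_within_interior) (use that in simp)
  ultimately show "\<exists>y. DERIV h x :> y \<and> y \<ge> 0"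
    using deriv[of x] nonneg[of x] \<open>0 \<le> t0\<close> by auto
next
  have "continuous_on {0..} h"
    unfolding continuous_on_eq_continuous_within using deriv DERIV_continuous by (metis atLeast_iff)
  then show "continuous_on {t0..t1} h"
    by (rule continuous_on_subset) (use \<open>0 \<le> t0\<close> in auto)
qed

lemma gronwall_vanishing:
  fixes V V' :: "real \<Rightarrow> real"
  assumes deriv: "\<And>t. t \<ge> 0 \<Longrightarrow> (V has_real_derivative V' t) (at t within {0..})"
    and growth: "\<And>t. V' t \<le> C * V t" and nonneg: "\<And>t. V t \<ge> 0"
    and "0 \<le> s" "V s = 0" "s \<le> t"
  shows "V t = 0"
proof -
  define h where "h t = - (exp (- C * t) * V t)" for t
  have "(h has_real_derivative - (exp (- C * t) * (V' t - C * V t))) (at t within {0..})"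
    if "t \<ge> 0" for t
    unfolding h_def by (rule derivative_eq_intros deriv[OF that] refl | simp add: algebra_simps)+
  then have "h s \<le> h t"
    by (rule DERIV_halfline_nonneg_imp_le) (use growth assms in \<open>auto simp: mult_nonneg_nonpos\<close>)
  then have "V t \<le> 0"
    using \<open>V s = 0\<close> unfolding h_def by (simp add: mult_le_0_iff)
  then show ?thesis using nonneg[of t] by simp
qed

lemma linear_differential_inequality:
  fixes f f' :: "real \<Rightarrow> real"
  assumes deriv: "\<And>t. t \<ge> 0 \<Longrightarrow> (f has_real_derivative f' t) (at t within {0..})"
    and ineq: "\<And>t. t0 \<le> t \<Longrightarrow> t \<le> t1 \<Longrightarrow> f' t \<ge> - B * f t + c"
    and "B > 0" "0 \<le> t0" "t0 \<le> t1"
  shows "f t1 - c / B \<ge> (f t0 - c / B) * exp (- B * (t1 - t0))"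
proof -
  define h where "h t = exp (B * t) * (f t - c / B)" for t
  have "(h has_real_derivative exp (B * t) * (f' t + B * f t - c)) (at t within {0..})"
    if "t \<ge> 0" for t
    unfolding h_def
    by (rule derivative_eq_intros deriv[OF that] refl | use \<open>B > 0\<close> in \<open>simp add: field_simps\<close>)+
  then have "h t0 \<le> h t1"
  proof (rule DERIV_halfline_nonneg_imp_le)
    fix t assume "t0 \<le> t" "t \<le> t1"
    then show "0 \<le> exp (B * t) * (f' t + B * f t - c)" using ineq[of t] by simp
  qed (use assms in auto)
  then have "exp (- B * t1) * h t0 \<le> exp (- B * t1) * h t1" by simp
  moreover have "exp (- B * t1) * h t1 = f t1 - c / B"
    unfolding h_def by (simp add: exp_minus_inverse mult.assoc[symmetric] exp_add[symmetric])
  moreover have "exp (- B * t1) * h t0 = (f t0 - c / B) * exp (- B * (t1 - t0))"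
    unfolding h_def by (simp add: exp_add[symmetric] algebra_simps)
  ultimately show ?thesis by linarith
qed

lemma has_real_derivative_max0_square:
  "((\<lambda>x::real. (max 0 x)\<^sup>2) has_real_derivative 2 * max 0 x) (at x)"
proof -
  consider "x > 0" | "x < 0" | "x = 0" by linarith
  then show ?thesis
  proof cases
    case 1
    have "((\<lambda>x::real. x\<^sup>2) has_real_derivative 2 * max 0 x) (at x)"
      using 1 by (auto intro!: derivative_eq_intros)
    then show ?thesis
      by (rule has_field_derivative_transform_within_open[where S="{0<..}"]) (use 1 in \<open>auto simp: max_def\<close>)
  next
    case 2
    have "((\<lambda>x::real. 0) has_real_derivative 2 * max 0 x) (at x)" using 2 by simp
    then show ?thesis
      by (rule has_field_derivative_transform_within_open[where S="{..<0}"]) (use 2 in \<open>auto simp: max_def\<close>)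
  next
    case 3
    have "((\<lambda>y. ((max 0 y)\<^sup>2 - (max 0 0)\<^sup>2) / (y - 0)) \<longlongrightarrow> 0) (at (0::real))"
    proof (rule Lim_null_comparison[where g="\<lambda>y. \<bar>y\<bar>"])
      show "\<forall>\<^sub>F y in at 0. norm (((max 0 y)\<^sup>2 - (max 0 0)\<^sup>2) / (y - 0)) \<le> \<bar>y\<bar>"
        by (auto simp: power2_eq_square abs_mult max_def divide_simps)
      show "((\<lambda>y. \<bar>y\<bar>) \<longlongrightarrow> 0) (at (0::real))"
        using tendsto_rabs[OF tendsto_ident_at[of 0 UNIV]] by simp
    qed
    then show ?thesis using 3 by (simp add: has_field_derivative_iff)
  qed
qed

lemma max0_mult_diff_le:
  fixes x y K :: real
  shows "max 0 (x - K) * (y - x) \<le> max 0 (x - K) * max 0 (y - K)"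
proof (cases "x > K")
  case True
  then have "y - x \<le> max 0 (y - K)" by simp
  then show ?thesis using True by (intro mult_left_mono) auto
qed simp

lemma power_floor_le_exp:
  fixes \<gamma> T t :: real
  assumes "0 < \<gamma>" "\<gamma> < 1" "T > 0" "t \<ge> 0"
  shows "\<gamma> ^ nat \<lfloor>t / T\<rfloor> \<le> exp (- (- ln \<gamma> / T) * t) / \<gamma>"
proof -
  define n where "n = nat \<lfloor>t / T\<rfloor>"
  have "real n \<ge> t / T - 1" unfolding n_def using assms by linarith
  moreover have "ln \<gamma> < 0" using assms by simp
  ultimately have "exp (real n * ln \<gamma>) \<le> exp ((t / T - 1) * ln \<gamma>)"
    by (simp add: mult_right_mono_neg)
  moreover have "exp (real n * ln \<gamma>) = \<gamma> ^ n" using assms by (simp add: exp_of_nat_mult)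
  moreover have "exp ((t / T - 1) * ln \<gamma>) = exp (- (- ln \<gamma> / T) * t) / \<gamma>"
    using assms by (simp add: algebra_simps exp_diff)
  ultimately show ?thesis unfolding n_def by simp
qed

lemma le_exp_decay_imp_nonpos:
  fixes x C \<kappa> :: real
  assumes "\<kappa> > 0" "\<And>t. t \<ge> 0 \<Longrightarrow> x \<le> C * exp (- \<kappa> * t)"
  shows "x \<le> 0"
proof -
  have "((\<lambda>t. C * exp (- \<kappa> * t)) \<longlongrightarrow> C * 0) at_top"
    using assms(1) by (intro tendsto_mult tendsto_const) real_asymp
  then have "x \<le> C * 0"
    by (rule tendsto_lowerbound) (use assms(2) in \<open>auto simp: eventually_at_top_linorder\<close>)
  then show ?thesis by simp
qed

lemma norm_le_sum_norm_nth: "norm (x :: ('a::real_normed_vector)^'n) \<le> (\<Sum>i\<in>UNIV. norm (x $ i))"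
  unfolding norm_vec_def by (rule L2_set_le_sum) simp

lemma componentwise_exp_convergence:
  fixes f :: "'x \<Rightarrow> real \<Rightarrow> real^'k"
  assumes "\<And>c. \<exists>L C \<kappa>. \<kappa> > 0 \<and> (\<forall>x\<in>X. \<forall>t\<ge>0. \<bar>f x t $ c - L\<bar> \<le> C * exp (- \<kappa> * t))"
  shows "\<exists>z C \<kappa>. \<kappa> > 0 \<and> (\<forall>x\<in>X. \<forall>t\<ge>0. norm (f x t - z) \<le> C * exp (- \<kappa> * t))"
proof -
  obtain L C \<kappa> where \<kappa>_pos: "\<And>c. \<kappa> c > 0"
    and conv: "\<And>c x t. x \<in> X \<Longrightarrow> t \<ge> 0 \<Longrightarrow> \<bar>f x t $ c - L c\<bar> \<le> C c * exp (- \<kappa> c * t)"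
    using assms by metis
  define \<kappa>0 where "\<kappa>0 = Min (range \<kappa>)"
  have "\<kappa>0 > 0" "\<And>c. \<kappa>0 \<le> \<kappa> c" unfolding \<kappa>0_def using \<kappa>_pos by auto
  show ?thesis
  proof (intro exI conjI ballI allI impI)
    fix x t assume x: "x \<in> X" and t: "0 \<le> (t::real)"
    have "norm (f x t - (\<chi> c. L c)) \<le> (\<Sum>c\<in>UNIV. \<bar>(f x t - (\<chi> c. L c)) $ c\<bar>)"
      by (rule norm_le_l1_cart)
    also have "\<dots> \<le> (\<Sum>c\<in>UNIV. \<bar>C c\<bar> * exp (- \<kappa>0 * t))"
    proof (rule sum_mono)
      fix c
      have "\<bar>(f x t - (\<chi> c. L c)) $ c\<bar> \<le> C c * exp (- \<kappa> c * t)" using conv[OF x t] by simp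
      also have "\<dots> \<le> \<bar>C c\<bar> * exp (- \<kappa>0 * t)"
        using \<open>\<kappa>0 \<le> \<kappa> c\<close> t by (intro mult_mono) (auto simp: mult_right_mono)
      finally show "\<bar>(f x t - (\<chi> c. L c)) $ c\<bar> \<le> \<bar>C c\<bar> * exp (- \<kappa>0 * t)" .
    qed
    also have "\<dots> = (\<Sum>c\<in>UNIV. \<bar>C c\<bar>) * exp (- \<kappa>0 * t)" by (simp add: sum_distrib_right)
    finally show "norm (f x t - (\<chi> c. L c)) \<le> (\<Sum>c\<in>UNIV. \<bar>C c\<bar>) * exp (- \<kappa>0 * t)" .
  qed (fact \<open>\<kappa>0 > 0\<close>)
qed

section \<open>Exponential scalar consensus\<close>

lemma shrinking_bounds_iterate:
  fixes y :: "'a \<Rightarrow> real \<Rightarrow> real" and \<gamma> T :: real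
  assumes shrink: "\<And>s m M. 0 \<le> s \<Longrightarrow> \<forall>i\<in>I. y i s \<in> {m..M} \<Longrightarrow>
      \<exists>m' M'. M' - m' \<le> \<gamma> * (M - m) \<and> (\<forall>i\<in>I. y i (s + T) \<in> {m'..M'})"
    and "\<gamma> \<ge> 0" "T \<ge> 0" and init: "\<forall>i\<in>I. y i 0 \<in> {m0..M0}"
  shows "\<exists>m M. M - m \<le> \<gamma> ^ n * (M0 - m0) \<and> (\<forall>i\<in>I. y i (real n * T) \<in> {m..M})"
proof (induction n)
  case 0
  show ?case using init by auto
next
  case (Suc n)
  then obtain m M where gap: "M - m \<le> \<gamma> ^ n * (M0 - m0)"
    and bounds: "\<forall>i\<in>I. y i (real n * T) \<in> {m..M}" by blast
  obtain m' M' where gap': "M' - m' \<le> \<gamma> * (M - m)"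
    and bounds': "\<forall>i\<in>I. y i (real n * T + T) \<in> {m'..M'}"
    using shrink[OF _ bounds] assms by auto
  show ?case
  proof (intro exI conjI)
    show "M' - m' \<le> \<gamma> ^ Suc n * (M0 - m0)"
      using gap' mult_left_mono[OF gap \<open>\<gamma> \<ge> 0\<close>] by simp
    show "\<forall>i\<in>I. y i (real (Suc n) * T) \<in> {m'..M'}"
      using bounds' by (simp add: algebra_simps)
  qed
qed

lemma shrinking_bounds_imp_exp_convergence:
  fixes y :: "'a \<Rightarrow> real \<Rightarrow> real" and \<gamma> T :: real
  assumes "finite I" "I \<noteq> {}" and \<gamma>: "0 < \<gamma>" "\<gamma> < 1" and "T > 0"
    and persist: "\<And>s t m M. 0 \<le> s \<Longrightarrow> s \<le> t \<Longrightarrow> \<forall>i\<in>I. y i s \<in> {m..M} \<Longrightarrow>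
      \<forall>i\<in>I. y i t \<in> {m..M}"
    and shrink: "\<And>s m M. 0 \<le> s \<Longrightarrow> \<forall>i\<in>I. y i s \<in> {m..M} \<Longrightarrow>
      \<exists>m' M'. M' - m' \<le> \<gamma> * (M - m) \<and> (\<forall>i\<in>I. y i (s + T) \<in> {m'..M'})"
  shows "\<exists>L C c. c > 0 \<and> (\<forall>i\<in>I. \<forall>t\<ge>0. \<bar>y i t - L\<bar> \<le> C * exp (- c * t))"
proof -
  define m0 where "m0 = Min ((\<lambda>i. y i 0) ` I)"
  define M0 where "M0 = Max ((\<lambda>i. y i 0) ` I)"
  have init: "\<forall>i\<in>I. y i 0 \<in> {m0..M0}"
    using \<open>finite I\<close> by (auto simp: m0_def M0_def)
  obtain lo hi where gap: "\<And>n. hi n - lo n \<le> \<gamma> ^ n * (M0 - m0)"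
    and at_step: "\<And>n. \<forall>i\<in>I. y i (real n * T) \<in> {lo n..hi n}"
  proof -
    have "\<exists>m M. M - m \<le> \<gamma> ^ n * (M0 - m0) \<and> (\<forall>i\<in>I. y i (real n * T) \<in> {m..M})" for n
      by (rule shrinking_bounds_iterate[OF shrink _ _ init]) (use \<gamma> \<open>T > 0\<close> in auto)
    then show ?thesis using that by metis
  qed
  have after: "y i t \<in> {lo n..hi n}" if "i \<in> I" "real n * T \<le> t" for i n t
    using persist[OF _ that(2) at_step[of n]] that \<open>T > 0\<close> by auto
  obtain i0 where i0: "i0 \<in> I" using \<open>I \<noteq> {}\<close> by blast
  have lo_le_hi: "lo n \<le> hi n'" for n n'
    using after[OF i0, of n "max (n * T) (n' * T)"] after[OF i0, of n' "max (n * T) (n' * T)"]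
    by auto
  define L where "L = Sup (range lo)"
  have L: "lo n \<le> L \<and> L \<le> hi n" for n
    unfolding L_def by (auto intro!: cSup_upper cSup_least bdd_aboveI lo_le_hi)
  have "M0 - m0 \<ge> 0" using init i0 by auto
  show ?thesis
  proof (intro exI conjI ballI allI impI)
    show "- ln \<gamma> / T > 0" using \<gamma> \<open>T > 0\<close> by (simp add: divide_neg_pos)
    fix i t assume "i \<in> I" "0 \<le> (t::real)"
    define n where "n = nat \<lfloor>t / T\<rfloor>"
    have "real n \<le> t / T"
      unfolding n_def using \<open>0 \<le> t\<close> \<open>T > 0\<close> by (intro of_nat_floor) simp
    then have "real n * T \<le> t" using \<open>T > 0\<close> by (simp add: le_divide_eq)
    then have "y i t \<in> {lo n..hi n}" by (rule after[OF \<open>i \<in> I\<close>])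
    then have "\<bar>y i t - L\<bar> \<le> hi n - lo n" using L[of n] by auto
    also have "\<dots> \<le> \<gamma> ^ n * (M0 - m0)" by (rule gap)
    also have "\<dots> \<le> exp (- (- ln \<gamma> / T) * t) / \<gamma> * (M0 - m0)"
      unfolding n_def
      by (rule mult_right_mono[OF power_floor_le_exp]) (use \<gamma> \<open>T > 0\<close> \<open>0 \<le> t\<close> \<open>M0 - m0 \<ge> 0\<close> in auto)
    finally show "\<bar>y i t - L\<bar> \<le> (M0 - m0) / \<gamma> * exp (- (- ln \<gamma> / T) * t)"
      by (simp add: field_simps)
  qed
qed

fun reaches_within :: "('a \<Rightarrow> 'b set) \<Rightarrow> ('a \<Rightarrow> 'b \<Rightarrow> 'a) \<Rightarrow> 'a \<Rightarrow> nat \<Rightarrow> 'a \<Rightarrow> bool" where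
  "reaches_within S \<tau> r 0 i \<longleftrightarrow> i = r"
| "reaches_within S \<tau> r (Suc n) i \<longleftrightarrow>
    reaches_within S \<tau> r n i \<or> (\<exists>s\<in>S i. reaches_within S \<tau> r n (\<tau> i s))"

lemma reaches_within_mono: "reaches_within S \<tau> r n i \<Longrightarrow> n \<le> m \<Longrightarrow> reaches_within S \<tau> r m i"
  by (induction m) (auto simp: le_Suc_eq)

text \<open>Scalar consensus on a finite weighted digraph: node i has outgoing arcs labelled by S i,
  arc s leading to node \<tau> i s with weight b i s.\<close>
locale consensus_system =
  fixes I :: "'a set" and S :: "'a \<Rightarrow> 'b set" and \<tau> :: "'a \<Rightarrow> 'b \<Rightarrow> 'a"
    and b :: "'a \<Rightarrow> 'b \<Rightarrow> real" and y :: "'a \<Rightarrow> real \<Rightarrow> real"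
  assumes finite_nodes: "finite I" and finite_arcs: "\<And>i. i \<in> I \<Longrightarrow> finite (S i)"
    and target_in_nodes: "\<And>i s. i \<in> I \<Longrightarrow> s \<in> S i \<Longrightarrow> \<tau> i s \<in> I"
    and weight_pos: "\<And>i s. i \<in> I \<Longrightarrow> s \<in> S i \<Longrightarrow> b i s > 0"
    and consensus_deriv: "\<And>i t. i \<in> I \<Longrightarrow> t \<ge> 0 \<Longrightarrow>
       (y i has_real_derivative (\<Sum>s\<in>S i. b i s * (y (\<tau> i s) t - y i t))) (at t within {0..})"
begin

lemma uminus_consensus_system: "consensus_system I S \<tau> b (\<lambda>i t. - y i t)"
proof
  fix i t assume "i \<in> I" "0 \<le> (t::real)"
  from DERIV_minus[OF consensus_deriv[OF this]]
  show "((\<lambda>t. - y i t) has_real_derivative (\<Sum>s\<in>S i. b i s * (- y (\<tau> i s) t - - y i t)))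
      (at t within {0..})"
    by (simp add: sum_negf[symmetric] algebra_simps)
qed (auto simp: finite_nodes finite_arcs target_in_nodes weight_pos)

lemma out_weight_nonneg: "i \<in> I \<Longrightarrow> (\<Sum>s\<in>S i. b i s) \<ge> 0"
  using weight_pos by (simp add: less_imp_le sum_nonneg)

text \<open>The energy of the excess over K has derivative at most a constant times itself,
  since each excess is pulled only towards values that exceed K by at most their own excess.\<close>
lemma upper_bound_persists:
  assumes "0 \<le> s" "s \<le> t" and bound: "\<forall>j\<in>I. y j s \<le> K" and "i \<in> I"
  shows "y i t \<le> K"
proof -
  define u where "u j t = max 0 (y j t - K)" for j t
  define V where "V t = (\<Sum>j\<in>I. (u j t)\<^sup>2)" for t
  define V' where "V' t = (\<Sum>j\<in>I. 2 * u j t * (\<Sum>s\<in>S j. b j s * (y (\<tau> j s) t - y j t)))" for t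
  define C where "C = 2 * (\<Sum>j\<in>I. \<Sum>s\<in>S j. b j s)"
  have deriv: "(V has_real_derivative V' t) (at t within {0..})" if "t \<ge> 0" for t
    unfolding V_def V'_def u_def
  proof (rule DERIV_sum)
    fix j assume "j \<in> I"
    from DERIV_chain2[OF has_real_derivative_max0_square
        DERIV_diff[OF consensus_deriv[OF \<open>j \<in> I\<close> that] DERIV_const[of K]]]
    show "((\<lambda>x. (max 0 (y j x - K))\<^sup>2) has_real_derivative
       2 * max 0 (y j t - K) * (\<Sum>s\<in>S j. b j s * (y (\<tau> j s) t - y j t))) (at t within {0..})"
      by simp
  qed
  have u_sq_le: "(u j t)\<^sup>2 \<le> V t" if "j \<in> I" for j t
    unfolding V_def using that finite_nodes by (intro member_le_sum) auto
  have u_mult_le: "u j t * u l t \<le> V t" if "j \<in> I" "l \<in> I" for j l t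
  proof -
    have "u j t * u l t \<le> ((u j t)\<^sup>2 + (u l t)\<^sup>2) / 2"
      using sum_squares_bound[of "u j t" "u l t"] by (simp add: power2_eq_square field_simps)
    also have "\<dots> \<le> V t" using u_sq_le[OF that(1), of t] u_sq_le[OF that(2), of t] by simp
    finally show ?thesis .
  qed
  have growth: "V' t \<le> C * V t" for t
  proof -
    have "V' t = (\<Sum>j\<in>I. \<Sum>s\<in>S j. 2 * b j s * (u j t * (y (\<tau> j s) t - y j t)))"
      unfolding V'_def by (simp add: sum_distrib_left algebra_simps)
    also have "\<dots> \<le> (\<Sum>j\<in>I. \<Sum>s\<in>S j. 2 * b j s * V t)"
    proof (intro sum_mono mult_left_mono)
      fix j s assume js: "j \<in> I" "s \<in> S j"
      have "u j t * (y (\<tau> j s) t - y j t) \<le> u j t * u (\<tau> j s) t"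
        unfolding u_def by (rule max0_mult_diff_le)
      also have "\<dots> \<le> V t" by (rule u_mult_le[OF js(1) target_in_nodes[OF js]])
      finally show "u j t * (y (\<tau> j s) t - y j t) \<le> V t" .
      show "0 \<le> 2 * b j s" using weight_pos[OF js] by simp
    qed
    also have "\<dots> = C * V t"
      unfolding C_def by (simp add: sum_distrib_left sum_distrib_right algebra_simps)
    finally show ?thesis .
  qed
  have "V s = 0"
    unfolding V_def u_def using bound by (intro sum.neutral) (force simp: max_def)
  moreover have "V x \<ge> 0" for x unfolding V_def by (simp add: sum_nonneg)
  ultimately have "V t = 0" using gronwall_vanishing[OF deriv growth] assms by blast
  then have "(u i t)\<^sup>2 = 0" using u_sq_le[OF \<open>i \<in> I\<close>, of t] by (metis antisym zero_le_power2)
  then show ?thesis unfolding u_def by (simp add: max_def split: if_splits)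
qed

lemma lower_bound_persists:
  assumes "0 \<le> s" "s \<le> t" and "\<forall>j\<in>I. K \<le> y j s" and "i \<in> I"
  shows "K \<le> y i t"
  using consensus_system.upper_bound_persists[OF uminus_consensus_system, of s t "-K" i] assms
  by auto

lemma bounds_persist:
  "0 \<le> s \<Longrightarrow> s \<le> t \<Longrightarrow> \<forall>j\<in>I. y j s \<in> {m..M} \<Longrightarrow> \<forall>j\<in>I. y j t \<in> {m..M}"
  using upper_bound_persists[of s t M] lower_bound_persists[of s t m] by auto

context
  fixes B \<beta> :: real
  assumes B_ge_1: "B \<ge> 1" and out_weight_le: "\<And>i. i \<in> I \<Longrightarrow> (\<Sum>s\<in>S i. b i s) \<le> B"
    and \<beta>_pos: "\<beta> > 0" and \<beta>_le_1: "\<beta> \<le> 1"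
    and weight_ge: "\<And>i s. i \<in> I \<Longrightarrow> s \<in> S i \<Longrightarrow> \<beta> \<le> b i s"
begin

lemma spread_rate_bounds: "0 < \<beta> * (1 - exp (- B)) / B" "\<beta> * (1 - exp (- B)) / B \<le> 1"
proof -
  show "0 < \<beta> * (1 - exp (- B)) / B" using \<beta>_pos B_ge_1 by simp
  have "\<beta> * (1 - exp (- B)) \<le> 1 * 1" using \<beta>_pos \<beta>_le_1 B_ge_1 by (intro mult_mono) auto
  then show "\<beta> * (1 - exp (- B)) / B \<le> 1" using B_ge_1 by simp
qed

lemma drift_le_deficit:
  assumes "i \<in> I" "\<forall>j\<in>I. y j x \<le> M"
  shows "(\<Sum>s\<in>S i. b i s * (y (\<tau> i s) x - y i x)) \<le> B * (M - y i x)"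
proof -
  have "(\<Sum>s\<in>S i. b i s * (y (\<tau> i s) x - y i x)) \<le> (\<Sum>s\<in>S i. b i s * (M - y i x))"
    using assms target_in_nodes weight_pos by (intro sum_mono mult_left_mono) (auto simp: less_imp_le)
  also have "\<dots> = (\<Sum>s\<in>S i. b i s) * (M - y i x)" by (simp add: sum_distrib_right)
  also have "\<dots> \<le> B * (M - y i x)" using out_weight_le assms by (intro mult_right_mono) auto
  finally show ?thesis .
qed

lemma deficit_deriv:
  assumes "i \<in> I" "0 \<le> x"
  shows "((\<lambda>t. M - y i t) has_real_derivative - (\<Sum>s\<in>S i. b i s * (y (\<tau> i s) x - y i x)))
    (at x within {0..})"
  using DERIV_diff[OF DERIV_const consensus_deriv[OF assms]] by simp

lemma deficit_decays_slowly:
  assumes "i \<in> I" "0 \<le> s" "s \<le> t0" "t0 \<le> t" and bound: "\<forall>j\<in>I. y j s \<le> M"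
  shows "(M - y i t0) * exp (- B * (t - t0)) \<le> M - y i t"
proof -
  have "M - y i t - 0 / B \<ge> (M - y i t0 - 0 / B) * exp (- B * (t - t0))"
  proof (rule linear_differential_inequality[OF deficit_deriv[OF \<open>i \<in> I\<close>]])
    fix x assume "t0 \<le> x"
    then have "\<forall>j\<in>I. y j x \<le> M" using upper_bound_persists[OF _ _ bound] assms by auto
    then show "- B * (M - y i x) + 0 \<le> - (\<Sum>s\<in>S i. b i s * (y (\<tau> i s) x - y i x))"
      using drift_le_deficit[OF \<open>i \<in> I\<close>] by simp
  qed (use B_ge_1 assms in auto)
  then show ?thesis by simp
qed

lemma drift_le_deficit_minus:
  assumes i: "i \<in> I" "\<sigma> \<in> S i" and bound: "\<forall>j\<in>I. y j x \<le> M"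
    and succ: "y (\<tau> i \<sigma>) x \<le> M - D" and "D \<ge> 0"
  shows "(\<Sum>s\<in>S i. b i s * (y (\<tau> i s) x - y i x)) \<le> B * (M - y i x) - \<beta> * D"
proof -
  have "(\<Sum>s\<in>S i. b i s * (y (\<tau> i s) x - y i x))
      \<le> (\<Sum>s\<in>S i. b i s * (M - y i x) - (if s = \<sigma> then b i s * D else 0))"
  proof (rule sum_mono)
    fix s assume s: "s \<in> S i"
    have "y (\<tau> i s) x \<le> M - (if s = \<sigma> then D else 0)"
      using succ bound target_in_nodes[OF i(1) s] by auto
    from mult_left_mono[OF this less_imp_le[OF weight_pos[OF i(1) s]]]
    show "b i s * (y (\<tau> i s) x - y i x) \<le> b i s * (M - y i x) - (if s = \<sigma> then b i s * D else 0)"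
      by (auto simp: algebra_simps)
  qed
  also have "\<dots> = (\<Sum>s\<in>S i. b i s) * (M - y i x) - b i \<sigma> * D"
    using i finite_arcs by (simp add: sum_subtractf sum_distrib_right)
  also have "\<dots> \<le> B * (M - y i x) - \<beta> * D"
    using out_weight_le[OF i(1)] bound weight_ge[OF i] \<open>D \<ge> 0\<close> i(1)
    by (intro diff_mono mult_right_mono) auto
  finally show ?thesis .
qed

lemma deficit_from_successor:
  assumes i: "i \<in> I" "\<sigma> \<in> S i" and "0 \<le> s" "s \<le> t0" "t0 + 1 \<le> t"
    and bound: "\<forall>j\<in>I. y j s \<le> M" and "D \<ge> 0"
    and succ: "\<And>x. t0 \<le> x \<Longrightarrow> x \<le> t \<Longrightarrow> y (\<tau> i \<sigma>) x \<le> M - D"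
  shows "\<beta> * D * (1 - exp (- B)) / B \<le> M - y i t"
proof -
  have bound_after: "\<forall>j\<in>I. y j x \<le> M" if "t0 \<le> x" for x
    using upper_bound_persists[OF _ _ bound] that \<open>0 \<le> s\<close> \<open>s \<le> t0\<close> by auto
  have "M - y i t - \<beta> * D / B \<ge> (M - y i t0 - \<beta> * D / B) * exp (- B * (t - t0))"
  proof (rule linear_differential_inequality[OF deficit_deriv[OF \<open>i \<in> I\<close>]])
    fix x assume x: "t0 \<le> x" "x \<le> t"
    from drift_le_deficit_minus[OF i bound_after[OF x(1)] succ[OF x] \<open>D \<ge> 0\<close>]
    show "- B * (M - y i x) + \<beta> * D \<le> - (\<Sum>s\<in>S i. b i s * (y (\<tau> i s) x - y i x))"
      by simp
  qed (use B_ge_1 \<open>0 \<le> s\<close> \<open>s \<le> t0\<close> \<open>t0 + 1 \<le> t\<close> in auto)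
  moreover have "(M - y i t0 - \<beta> * D / B) * exp (- B * (t - t0)) \<ge> - (\<beta> * D / B) * exp (- B)"
  proof -
    have "M - y i t0 \<ge> 0" using bound_after[of t0] i by simp
    moreover have "\<beta> * D / B \<ge> 0" using \<beta>_pos \<open>D \<ge> 0\<close> B_ge_1 by simp
    moreover have "exp (- B * (t - t0)) \<le> exp (- B)" using B_ge_1 \<open>t0 + 1 \<le> t\<close> by simp
    ultimately show ?thesis
      by (smt (verit, ccfv_SIG) exp_gt_zero mult_left_mono mult_minus_left mult_right_mono)
  qed
  moreover have "\<beta> * D * (1 - exp (- B)) / B = \<beta> * D / B - \<beta> * D / B * exp (- B)"
    by (simp add: right_diff_distrib diff_divide_distrib)
  ultimately show ?thesis by linarith
qed

lemma deficit_spreads: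
  fixes N :: nat
  assumes "r \<in> I" "0 \<le> s" and bound: "\<forall>j\<in>I. y j s \<le> M" and "y r s \<le> M - d" "d \<ge> 0"
  shows "i \<in> I \<Longrightarrow> reaches_within S \<tau> r k i \<Longrightarrow> s + real k \<le> t \<Longrightarrow> t \<le> s + (real N + 1) \<Longrightarrow>
    exp (- B * (real N + 1)) * (\<beta> * (1 - exp (- B)) / B) ^ k * d \<le> M - y i t"
proof (induction k arbitrary: i t)
  case 0
  then have "i = r" by simp
  have "d * exp (- B * (real N + 1)) \<le> (M - y r s) * exp (- B * (t - s))"
    using assms 0 B_ge_1 by (intro mult_mono) auto
  also have "\<dots> \<le> M - y r t"
    by (rule deficit_decays_slowly[OF \<open>r \<in> I\<close> \<open>0 \<le> s\<close> order_refl _ bound]) (use 0 in simp)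
  finally show ?case using \<open>i = r\<close> by (simp add: mult.commute)
next
  case (Suc k)
  let ?E = "exp (- B * (real N + 1))" and ?q = "\<beta> * (1 - exp (- B)) / B"
  have q: "0 \<le> ?q" "?q \<le> 1" using spread_rate_bounds by auto
  from Suc.prems(2) consider "reaches_within S \<tau> r k i" | \<sigma> where "\<sigma> \<in> S i" "reaches_within S \<tau> r k (\<tau> i \<sigma>)"
    by auto
  then show ?case
  proof cases
    case 1
    have "?E * ?q ^ Suc k * d \<le> ?E * ?q ^ k * d"
      using q \<open>d \<ge> 0\<close> by (intro mult_right_mono mult_left_mono power_decreasing) auto
    also have "\<dots> \<le> M - y i t" by (rule Suc.IH[OF Suc.prems(1) 1]) (use Suc.prems in auto)
    finally show ?thesis .
  next
    case 2
    have "\<beta> * (?E * ?q ^ k * d) * (1 - exp (- B)) / B \<le> M - y i t"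
    proof (rule deficit_from_successor[OF Suc.prems(1) 2(1) \<open>0 \<le> s\<close> _ _ bound])
      show "s \<le> s + real k" "s + real k + 1 \<le> t" using Suc.prems(3) by auto
      show "0 \<le> ?E * ?q ^ k * d" using q \<open>d \<ge> 0\<close> by simp
      fix x assume "s + real k \<le> x" "x \<le> t"
      then show "y (\<tau> i \<sigma>) x \<le> M - ?E * ?q ^ k * d"
        using Suc.IH[OF target_in_nodes[OF Suc.prems(1) 2(1)] 2(2), of x] Suc.prems(4) by linarith
    qed
    then show ?thesis by (simp add: field_simps)
  qed
qed

text \<open>The value at r lies in the upper or in the lower half of the range; the deficit from the
  corresponding end of the range spreads from r to every node.\<close>
lemma range_contracts:
  fixes N :: nat
  defines "\<delta> \<equiv> exp (- B * (real N + 1)) * (\<beta> * (1 - exp (- B)) / B) ^ N"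
  assumes "r \<in> I" and reach: "\<And>i. i \<in> I \<Longrightarrow> reaches_within S \<tau> r N i"
    and "0 \<le> s" and bounds: "\<forall>i\<in>I. y i s \<in> {m..M}"
  shows "\<exists>m' M'. M' - m' \<le> (1 - \<delta> / 2) * (M - m) \<and> (\<forall>i\<in>I. y i (s + (real N + 1)) \<in> {m'..M'})"
proof -
  let ?t = "s + (real N + 1)"
  define \<epsilon> where "\<epsilon> = \<delta> * ((M - m) / 2)"
  have persist: "\<forall>i\<in>I. y i ?t \<in> {m..M}" using bounds_persist[OF \<open>0 \<le> s\<close> _ bounds] by simp
  have "M - m \<ge> 0" using bounds \<open>r \<in> I\<close> by auto
  have shrunk: "M - \<epsilon> - m \<le> (1 - \<delta> / 2) * (M - m)" unfolding \<epsilon>_def by (simp add: algebra_simps)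
  show ?thesis
  proof (cases "y r s \<le> M - (M - m) / 2")
    case True
    have "y i ?t \<le> M - \<epsilon>" if "i \<in> I" for i
      using deficit_spreads[OF \<open>r \<in> I\<close> \<open>0 \<le> s\<close> _ True _ that reach[OF that], where t = ?t and N = N]
        bounds \<open>M - m \<ge> 0\<close>
      unfolding \<epsilon>_def \<delta>_def by (auto simp: mult.assoc)
    then have "\<forall>i\<in>I. y i ?t \<in> {m..M - \<epsilon>}" using persist by auto
    then show ?thesis using shrunk by blast
  next
    case False
    then have below: "- y r s \<le> - m - (M - m) / 2" by (simp add: field_simps)
    have "m + \<epsilon> \<le> y i ?t" if "i \<in> I" for i
      using consensus_system.deficit_spreads[OF uminus_consensus_system B_ge_1 out_weight_le \<beta>_pos
          \<beta>_le_1 weight_ge \<open>r \<in> I\<close> \<open>0 \<le> s\<close> _ below _ that reach[OF that], where t = ?t and N = N]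
        bounds \<open>M - m \<ge> 0\<close>
      unfolding \<epsilon>_def \<delta>_def by (auto simp: mult.assoc)
    then have "\<forall>i\<in>I. y i ?t \<in> {m + \<epsilon>..M}" using persist by auto
    moreover have "M - (m + \<epsilon>) \<le> (1 - \<delta> / 2) * (M - m)" using shrunk by simp
    ultimately show ?thesis by blast
  qed
qed

end

lemma weight_bounds_exist:
  "\<exists>B \<beta>. B \<ge> 1 \<and> (\<forall>i\<in>I. (\<Sum>s\<in>S i. b i s) \<le> B) \<and> \<beta> > 0 \<and> \<beta> \<le> 1
    \<and> (\<forall>i\<in>I. \<forall>s\<in>S i. \<beta> \<le> b i s)"
proof (intro exI conjI ballI)
  let ?B = "1 + (\<Sum>i\<in>I. \<Sum>s\<in>S i. b i s)" and ?W = "\<Union>i\<in>I. b i ` S i"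
  show "?B \<ge> 1" using out_weight_nonneg by (simp add: sum_nonneg)
  fix i assume "i \<in> I"
  have "(\<Sum>s\<in>S i. b i s) \<le> (\<Sum>i\<in>I. \<Sum>s\<in>S i. b i s)"
    by (rule member_le_sum[OF \<open>i \<in> I\<close>]) (use out_weight_nonneg finite_nodes in auto)
  then show "(\<Sum>s\<in>S i. b i s) \<le> ?B" by simp
next
  let ?W = "\<Union>i\<in>I. b i ` S i"
  have "finite ?W" using finite_nodes finite_arcs by auto
  then show "Min (insert 1 ?W) > 0" "Min (insert 1 ?W) \<le> 1"
    and "\<And>i s. i \<in> I \<Longrightarrow> s \<in> S i \<Longrightarrow> Min (insert 1 ?W) \<le> b i s"
    using weight_pos by (auto intro!: Min_le)
qed

lemma uniform_reach_bound:
  assumes "\<And>i. i \<in> I \<Longrightarrow> \<exists>n. reaches_within S \<tau> r n i"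
  shows "\<exists>N. \<forall>i\<in>I. reaches_within S \<tau> r N i"
proof -
  obtain n where n: "\<And>i. i \<in> I \<Longrightarrow> reaches_within S \<tau> r (n i) i" using assms by metis
  have "reaches_within S \<tau> r (Max (n ` I)) i" if "i \<in> I" for i
    by (rule reaches_within_mono[OF n[OF that]]) (use finite_nodes that in simp)
  then show ?thesis by blast
qed

theorem exp_consensus:
  assumes "r \<in> I" and "\<And>i. i \<in> I \<Longrightarrow> \<exists>n. reaches_within S \<tau> r n i"
  shows "\<exists>L C c. c > 0 \<and> (\<forall>i\<in>I. \<forall>t\<ge>0. \<bar>y i t - L\<bar> \<le> C * exp (- c * t))"
proof -
  obtain B \<beta> where B: "B \<ge> 1" "\<And>i. i \<in> I \<Longrightarrow> (\<Sum>s\<in>S i. b i s) \<le> B"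
    and \<beta>: "\<beta> > 0" "\<beta> \<le> 1" "\<And>i s. i \<in> I \<Longrightarrow> s \<in> S i \<Longrightarrow> \<beta> \<le> b i s"
    using weight_bounds_exist by blast
  obtain N where reach: "\<And>i. i \<in> I \<Longrightarrow> reaches_within S \<tau> r N i"
    using uniform_reach_bound assms(2) by blast
  define \<delta> where "\<delta> = exp (- B * (real N + 1)) * (\<beta> * (1 - exp (- B)) / B) ^ N"
  have q: "0 < \<beta> * (1 - exp (- B)) / B" "\<beta> * (1 - exp (- B)) / B \<le> 1"
    using spread_rate_bounds[OF B \<beta>] by auto
  have "0 < \<delta>" unfolding \<delta>_def using q by simp
  have "\<delta> \<le> 1" unfolding \<delta>_def by (rule mult_le_one) (use q B in \<open>auto intro: power_le_one\<close>)
  show ?thesis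
  proof (rule shrinking_bounds_imp_exp_convergence[where \<gamma> = "1 - \<delta> / 2" and T = "real N + 1"])
    show "finite I" "I \<noteq> {}" "0 < 1 - \<delta> / 2" "1 - \<delta> / 2 < 1" "0 < real N + 1"
      using finite_nodes \<open>r \<in> I\<close> \<open>0 < \<delta>\<close> \<open>\<delta> \<le> 1\<close> by auto
    fix s m M assume "0 \<le> s" and bounds: "\<forall>i\<in>I. y i s \<in> {m..M}"
    show "\<exists>m' M'. M' - m' \<le> (1 - \<delta> / 2) * (M - m) \<and> (\<forall>i\<in>I. y i (s + (real N + 1)) \<in> {m'..M'})"
      using range_contracts[OF B \<beta> \<open>r \<in> I\<close> reach \<open>0 \<le> s\<close> bounds] unfolding \<delta>_def .
  qed (use bounds_persist in blast)
qed

end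

section \<open>Walks in voltage graphs\<close>

lemma orthogonal_matrix_inv_eq_transpose:
  fixes Q :: "real^'k^'k"
  assumes "orthogonal_matrix Q"
  shows "matrix_inv Q = transpose Q"
proof -
  have "\<exists>Q'. Q ** Q' = mat 1 \<and> Q' ** Q = mat 1"
    using assms unfolding orthogonal_matrix_def by blast
  then have "matrix_inv Q ** Q = mat 1" unfolding matrix_inv_def by (rule someI2_ex) blast
  then have "matrix_inv Q = matrix_inv Q ** (Q ** transpose Q)"
    using assms by (simp add: orthogonal_matrix_def)
  also have "\<dots> = transpose Q" by (simp add: matrix_mul_assoc \<open>matrix_inv Q ** Q = mat 1\<close>)
  finally show ?thesis .
qed

lemma orthogonal_matrix_norm_mult: "orthogonal_matrix (Q::real^'k^'k) \<Longrightarrow> norm (Q *v x) = norm x"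
  by (metis orthogonal_transformation_matrix orthogonal_transformation_norm
      matrix_of_matrix_vector_mul matrix_vector_mul_linear)

lemma walk_volt_imp_semiwalk_volt: "walk_volt E \<rho> i j g \<Longrightarrow> semiwalk_volt E \<rho> i j g"
  by (induction rule: walk_volt.induct) (auto intro: semiwalk_volt.intros)

lemma semiwalk_volt_append:
  "semiwalk_volt E \<rho> j l h \<Longrightarrow> semiwalk_volt E \<rho> i j g \<Longrightarrow> semiwalk_volt E \<rho> i l (g ** h)"
proof (induction rule: semiwalk_volt.induct)
  case (sw_fwd j l' h l)
  then show ?case by (metis matrix_mul_assoc semiwalk_volt.sw_fwd)
next
  case (sw_bwd j l' h l)
  then show ?case by (metis matrix_mul_assoc semiwalk_volt.sw_bwd)
qed simp

lemma walk_volt_append: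
  "walk_volt E \<rho> j l h \<Longrightarrow> walk_volt E \<rho> i j g \<Longrightarrow> walk_volt E \<rho> i l (g ** h)"
proof (induction rule: walk_volt.induct)
  case (w_fwd j l' h l)
  then show ?case by (metis matrix_mul_assoc walk_volt.w_fwd)
qed simp

lemma walk_volt_edge: "(i, j) \<in> E \<Longrightarrow> walk_volt E \<rho> i j (\<rho> (i, j))"
  using walk_volt.w_fwd[OF walk_volt.w_nil] by fastforce

lemma semiwalk_volt_reverse:
  assumes orth: "\<And>e. e \<in> E \<Longrightarrow> orthogonal_matrix (\<rho> e)"
  shows "semiwalk_volt E \<rho> i j g \<Longrightarrow> semiwalk_volt E \<rho> j i (transpose g)"
proof (induction rule: semiwalk_volt.induct)
  case (sw_nil i)
  show ?case using semiwalk_volt.sw_nil by simp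
next
  case (sw_fwd i j g l)
  have "semiwalk_volt E \<rho> l j (mat 1 ** matrix_inv (\<rho> (j, l)))"
    by (rule semiwalk_volt.sw_bwd[OF semiwalk_volt.sw_nil sw_fwd(2)])
  then have "semiwalk_volt E \<rho> l j (transpose (\<rho> (j, l)))"
    using orthogonal_matrix_inv_eq_transpose[OF orth[OF sw_fwd(2)]] by simp
  from semiwalk_volt_append[OF sw_fwd(3) this] show ?case by (simp add: matrix_transpose_mul)
next
  case (sw_bwd i j g l)
  have "semiwalk_volt E \<rho> l j (mat 1 ** \<rho> (l, j))"
    by (rule semiwalk_volt.sw_fwd[OF semiwalk_volt.sw_nil sw_bwd(2)])
  from semiwalk_volt_append[OF sw_bwd(3)] this show ?case
    using orthogonal_matrix_inv_eq_transpose[OF orth[OF sw_bwd(2)]] by (simp add: matrix_transpose_mul)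
qed

lemma walk_volt_in_group:
  assumes "point_group G" and "\<And>e. e \<in> E \<Longrightarrow> \<rho> e \<in> G"
  shows "walk_volt E \<rho> i j g \<Longrightarrow> g \<in> G"
proof (induction rule: walk_volt.induct)
  case (w_nil i)
  show ?case using \<open>point_group G\<close> unfolding point_group_def by blast
next
  case (w_fwd i j g l)
  then show ?case using assms unfolding point_group_def by blast
qed

lemma has_path_imp_walk_volt:
  assumes "has_path E u w"
  shows "\<exists>g. walk_volt E \<rho> u w g"
proof -
  have "\<exists>g. walk_volt E \<rho> (hd vs) (last vs) g"
    if "vs \<noteq> []" "\<forall>n. Suc n < length vs \<longrightarrow> (vs ! n, vs ! Suc n) \<in> E" for vs
    using that
  proof (induction vs)
    case (Cons x xs)
    show ?case
    proof (cases "xs = []")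
      case True
      then show ?thesis by (auto intro: walk_volt.w_nil)
    next
      case False
      have edge: "(x, hd xs) \<in> E"
        using Cons.prems(2)[rule_format, of 0] False by (simp add: hd_conv_nth)
      have "\<forall>n. Suc n < length xs \<longrightarrow> (xs ! n, xs ! Suc n) \<in> E"
        using Cons.prems(2) by (metis Suc_less_eq length_Cons nth_Cons_Suc)
      then obtain g where "walk_volt E \<rho> (hd xs) (last xs) g" using Cons.IH[OF False] by blast
      from walk_volt_append[OF this walk_volt_edge[OF edge]] show ?thesis using False by auto
    qed
  qed simp
  then show ?thesis using assms unfolding has_path_def by blast
qed

locale rooted_voltage_graph =
  fixes E :: "('v::finite \<times> 'v) set" and G :: "(real^'k^'k) set"
    and \<rho> :: "'v \<times> 'v \<Rightarrow> real^'k^'k" and r :: 'v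
  assumes point_group: "point_group G" and voltage_in_group: "\<And>e. e \<in> E \<Longrightarrow> \<rho> e \<in> G"
    and root: "is_root E r"
    and local_group_eq_dir: "local_group E \<rho> r = dir_local_group E \<rho> r"
begin

lemma group_orthogonal: "g \<in> G \<Longrightarrow> orthogonal_matrix g"
  using point_group unfolding point_group_def by simp

lemma voltage_orthogonal: "e \<in> E \<Longrightarrow> orthogonal_matrix (\<rho> e)"
  by (rule group_orthogonal[OF voltage_in_group])

lemma walk_orthogonal: "walk_volt E \<rho> i j g \<Longrightarrow> orthogonal_matrix g"
  by (rule group_orthogonal[OF walk_volt_in_group[OF point_group voltage_in_group]])

lemma walk_to_root_exists: "\<exists>w. walk_volt E \<rho> v r w"
  using root has_path_imp_walk_volt[of E v r \<rho>] unfolding is_root_def by blast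

text \<open>Closing up through another walk to the root gives a closed semi-walk at the root, which
  G_r = G_r^* turns into a closed walk.\<close>
lemma semiwalk_then_walk_to_root:
  assumes "semiwalk_volt E \<rho> u v g" and "walk_volt E \<rho> v r w"
  shows "walk_volt E \<rho> u r (g ** w)"
proof -
  obtain w' where w': "walk_volt E \<rho> u r w'" using walk_to_root_exists by blast
  have "semiwalk_volt E \<rho> r u (transpose w')"
    by (rule semiwalk_volt_reverse[OF voltage_orthogonal walk_volt_imp_semiwalk_volt[OF w']])
  from semiwalk_volt_append[OF assms(1) this]
  have "semiwalk_volt E \<rho> r v (transpose w' ** g)" .
  from semiwalk_volt_append[OF walk_volt_imp_semiwalk_volt[OF assms(2)] this]
  have "semiwalk_volt E \<rho> r r (transpose w' ** g ** w)" .
  then have "walk_volt E \<rho> r r (transpose w' ** g ** w)"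
    using local_group_eq_dir unfolding local_group_def dir_local_group_def by blast
  from walk_volt_append[OF this w'] have "walk_volt E \<rho> u r (w' ** (transpose w' ** g ** w))" .
  moreover have "w' ** (transpose w' ** g ** w) = (w' ** transpose w') ** g ** w"
    by (simp only: matrix_mul_assoc)
  moreover have "w' ** transpose w' = mat 1"
    using walk_orthogonal[OF w'] by (simp add: orthogonal_matrix_def)
  ultimately show ?thesis by simp
qed

lemma walk_to_root_backward:
  assumes "(v, v') \<in> E" "walk_volt E \<rho> v r w"
  shows "walk_volt E \<rho> v' r (transpose (\<rho> (v, v')) ** w)"
proof -
  have "semiwalk_volt E \<rho> v' v (mat 1 ** matrix_inv (\<rho> (v, v')))"
    by (rule semiwalk_volt.sw_bwd[OF semiwalk_volt.sw_nil \<open>(v, v') \<in> E\<close>])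
  then show ?thesis
    using semiwalk_then_walk_to_root[OF _ assms(2)]
      orthogonal_matrix_inv_eq_transpose[OF voltage_orthogonal[OF assms(1)]] by simp
qed

lemma walk_to_root_local_group:
  "\<theta> \<in> local_group E \<rho> v \<Longrightarrow> walk_volt E \<rho> v r w \<Longrightarrow> walk_volt E \<rho> v r (\<theta> ** w)"
  using semiwalk_then_walk_to_root unfolding local_group_def by blast

end

section \<open>The lifted dynamics\<close>

lemma transpose_mult_clustering_field:
  "(transpose w *v (clustering_field E \<rho> a q $ v)) $ c =
    (\<Sum>j\<in>{j. (v, j) \<in> E}. a v j *
      ((transpose (transpose (\<rho> (v, j)) ** w) *v (q $ j)) $ c - (transpose w *v (q $ v)) $ c))"
proof -
  have "(transpose w *v (clustering_field E \<rho> a q $ v)) $ c =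
      (\<Sum>j\<in>{j. (v, j) \<in> E}. (transpose w *v (a v j *\<^sub>R (\<rho> (v, j) *v (q $ j) - q $ v))) $ c)"
    unfolding clustering_field_def by (simp add: linear_sum[OF matrix_vector_mul_linear] o_def)
  also have "\<dots> = (\<Sum>j\<in>{j. (v, j) \<in> E}. a v j *
      ((transpose (transpose (\<rho> (v, j)) ** w) *v (q $ j)) $ c - (transpose w *v (q $ v)) $ c))"
  proof (rule sum.cong[OF refl])
    fix j
    have "transpose w *v (\<rho> (v, j) *v (q $ j)) = transpose (transpose (\<rho> (v, j)) ** w) *v (q $ j)"
      by (simp only: matrix_vector_mul_assoc matrix_transpose_mul transpose_transpose)
    then show "(transpose w *v (a v j *\<^sub>R (\<rho> (v, j) *v (q $ j) - q $ v))) $ c =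
        a v j * ((transpose (transpose (\<rho> (v, j)) ** w) *v (q $ j)) $ c - (transpose w *v (q $ v)) $ c)"
      by (simp only: matrix_vector_mult_scaleR matrix_vector_mult_diff_distrib vector_scaleR_component
          vector_minus_component real_scaleR_def)
  qed
  finally show ?thesis .
qed

context rooted_voltage_graph
begin

text \<open>The lifted graph has a node (v, w) for every voltage w of a walk from v to the root. In the
  coordinates transpose w *v x_v the G-clustering dynamics becomes scalar consensus on it, since
  the term \<theta>_vj x_j seen from (v, w) is x_j seen from (j, transpose \<theta>_vj ** w).\<close>
definition root_walks :: "('v \<times> (real^'k^'k)) set" where
  "root_walks = {(v, w). walk_volt E \<rho> v r w}"

definition lifted_arcs :: "'v \<times> (real^'k^'k) \<Rightarrow> 'v set" where
  "lifted_arcs x = {j. (fst x, j) \<in> E}"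

definition lifted_target :: "'v \<times> (real^'k^'k) \<Rightarrow> 'v \<Rightarrow> 'v \<times> (real^'k^'k)" where
  "lifted_target x j = (j, transpose (\<rho> (fst x, j)) ** snd x)"

lemma finite_root_walks: "finite root_walks"
proof (rule finite_subset)
  show "root_walks \<subseteq> UNIV \<times> G"
    unfolding root_walks_def using walk_volt_in_group[OF point_group voltage_in_group] by auto
  show "finite ((UNIV :: 'v set) \<times> G)" using point_group unfolding point_group_def by simp
qed

lemma lifted_target_in_root_walks: "x \<in> root_walks \<Longrightarrow> j \<in> lifted_arcs x \<Longrightarrow> lifted_target x j \<in> root_walks"
  unfolding root_walks_def lifted_arcs_def lifted_target_def using walk_to_root_backward by auto

lemma walk_lifts_to_reach:
  "walk_volt E \<rho> i j g \<Longrightarrow> reaches_within lifted_arcs lifted_target x0 n (j, transpose g ** w)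
    \<Longrightarrow> \<exists>m. reaches_within lifted_arcs lifted_target x0 m (i, w)"
proof (induction arbitrary: n rule: walk_volt.induct)
  case (w_fwd i j g l)
  have "reaches_within lifted_arcs lifted_target x0 n (lifted_target (j, transpose g ** w) l)"
    using w_fwd.prems unfolding lifted_target_def by (simp add: matrix_transpose_mul matrix_mul_assoc)
  moreover have "l \<in> lifted_arcs (j, transpose g ** w)" using w_fwd.hyps(2) unfolding lifted_arcs_def by simp
  ultimately have "reaches_within lifted_arcs lifted_target x0 (Suc n) (j, transpose g ** w)"
    unfolding reaches_within.simps(2) by blast
  then show ?case by (rule w_fwd.IH)
qed (simp; blast)

lemma root_walks_reach_root:
  assumes "x \<in> root_walks"
  shows "\<exists>n. reaches_within lifted_arcs lifted_target (r, mat 1) n x"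
proof -
  obtain v w where x: "x = (v, w)" and walk: "walk_volt E \<rho> v r w"
    using assms unfolding root_walks_def by auto
  have "transpose w ** w = mat 1" using walk_orthogonal[OF walk] unfolding orthogonal_matrix_def by simp
  then have "reaches_within lifted_arcs lifted_target (r, mat 1) 0 (r, transpose w ** w)"
    by (simp add: reaches_within.simps)
  then show ?thesis using walk_lifts_to_reach[OF walk] x by blast
qed

context
  fixes a :: "'v \<Rightarrow> 'v \<Rightarrow> real" and p :: "real \<Rightarrow> (real^'k)^'v"
  assumes weight_pos: "\<And>i j. (i, j) \<in> E \<Longrightarrow> a i j > 0"
    and clustering_ode: "\<And>t. t \<ge> 0 \<Longrightarrow>
      (p has_vector_derivative clustering_field E \<rho> a (p t)) (at t within {0..})"
begin

lemma lifted_consensus_system: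
  "consensus_system root_walks lifted_arcs lifted_target (\<lambda>x j. a (fst x) j)
    (\<lambda>x t. (transpose (snd x) *v (p t $ fst x)) $ c)"
proof
  fix x t assume "x \<in> root_walks" "0 \<le> (t::real)"
  obtain v w where x: "x = (v, w)" by force
  have "bounded_linear (\<lambda>q :: (real^'k)^'v. (transpose w *v (q $ v)) $ c)"
    by (intro bounded_linear_compose[OF bounded_linear_vec_nth]
        bounded_linear_compose[OF matrix_vector_mul_bounded_linear] bounded_linear_vec_nth)
  note deriv = bounded_linear.has_vector_derivative[OF this clustering_ode[OF \<open>0 \<le> t\<close>]]
  show "((\<lambda>t. (transpose (snd x) *v (p t $ fst x)) $ c) has_real_derivative
      (\<Sum>j\<in>lifted_arcs x. a (fst x) j * ((transpose (snd (lifted_target x j)) *v (p t $ fst (lifted_target x j))) $ c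
        - (transpose (snd x) *v (p t $ fst x)) $ c))) (at t within {0..})"
    using deriv unfolding has_real_derivative_iff_has_vector_derivative x lifted_arcs_def
      lifted_target_def fst_conv snd_conv
    by (simp only: transpose_mult_clustering_field)
qed (auto simp: finite_root_walks lifted_target_in_root_walks lifted_arcs_def weight_pos)

lemma clustering_converges_along_walks:
  "\<exists>z C \<kappa>. \<kappa> > 0 \<and>
    (\<forall>v w t. walk_volt E \<rho> v r w \<longrightarrow> t \<ge> 0 \<longrightarrow> norm (p t $ v - w *v z) \<le> C * exp (- \<kappa> * t))"
proof -
  have "\<exists>L C \<kappa>. \<kappa> > 0 \<and> (\<forall>x\<in>root_walks. \<forall>t\<ge>0.
      \<bar>(transpose (snd x) *v (p t $ fst x)) $ c - L\<bar> \<le> C * exp (- \<kappa> * t))" for c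
  proof (rule consensus_system.exp_consensus[OF lifted_consensus_system])
    show "(r, mat 1) \<in> root_walks" unfolding root_walks_def by (simp add: walk_volt.w_nil)
  qed (rule root_walks_reach_root)
  from componentwise_exp_convergence[OF this] obtain z C \<kappa> where "\<kappa> > 0"
    and conv: "\<And>x t. x \<in> root_walks \<Longrightarrow> t \<ge> 0 \<Longrightarrow>
      norm (transpose (snd x) *v (p t $ fst x) - z) \<le> C * exp (- \<kappa> * t)"
    by blast
  have "norm (p t $ v - w *v z) \<le> C * exp (- \<kappa> * t)" if walk: "walk_volt E \<rho> v r w" and "t \<ge> 0" for v w t
  proof -
    have orth: "orthogonal_matrix w" by (rule walk_orthogonal[OF walk])
    then have "w ** transpose w = mat 1" unfolding orthogonal_matrix_def by simp
    then have "w *v (transpose w *v (p t $ v)) = p t $ v"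
      by (simp only: matrix_vector_mul_assoc matrix_vector_mul_lid)
    then have "p t $ v - w *v z = w *v (transpose w *v (p t $ v) - z)"
      by (simp only: matrix_vector_mult_diff_distrib)
    then have "norm (p t $ v - w *v z) = norm (transpose w *v (p t $ v) - z)"
      using orthogonal_matrix_norm_mult[OF orth] by simp
    also have "\<dots> \<le> C * exp (- \<kappa> * t)"
      using conv[of "(v, w)" t] walk \<open>t \<ge> 0\<close> by (simp add: root_walks_def del: transpose_matrix_vector)
    finally show ?thesis .
  qed
  then show ?thesis using \<open>\<kappa> > 0\<close> by blast
qed

end

definition transported :: "real^'k \<Rightarrow> (real^'k)^'v" where
  "transported z = (\<chi> v. (SOME w. walk_volt E \<rho> v r w) *v z)"

lemma walk_to_root_some: "walk_volt E \<rho> v r (SOME w. walk_volt E \<rho> v r w)"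
  using walk_to_root_exists by (rule someI_ex)

lemma norm_transported: "norm (transported z $ v) = norm z"
  unfolding transported_def using orthogonal_matrix_norm_mult[OF walk_orthogonal[OF walk_to_root_some]]
  by simp

lemma norm_diff_transported_le:
  assumes conv: "\<And>v w. walk_volt E \<rho> v r w \<Longrightarrow> norm (q $ v - w *v z) \<le> \<epsilon>"
  shows "norm (q - transported z) \<le> real CARD('v) * \<epsilon>"
proof -
  have "norm (q - transported z) \<le> (\<Sum>v\<in>UNIV. norm ((q - transported z) $ v))"
    by (rule norm_le_sum_norm_nth)
  also have "\<dots> \<le> (\<Sum>v\<in>(UNIV :: 'v set). \<epsilon>)"
    using conv[OF walk_to_root_some] unfolding transported_def by (intro sum_mono) simp
  finally show ?thesis by simp
qed

lemma walk_independent_if_exp_convergent: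
  assumes "\<kappa> > 0"
    and conv: "\<And>v w t. walk_volt E \<rho> v r w \<Longrightarrow> t \<ge> 0 \<Longrightarrow> norm (p t $ v - w *v z) \<le> C * exp (- \<kappa> * t)"
    and "walk_volt E \<rho> v r w" "walk_volt E \<rho> v r w'"
  shows "w *v z = w' *v z"
proof -
  have "norm (w *v z - w' *v z) \<le> 0"
  proof (rule le_exp_decay_imp_nonpos[OF \<open>\<kappa> > 0\<close>])
    fix t :: real assume "t \<ge> 0"
    have "norm (w *v z - w' *v z) \<le> norm (p t $ v - w *v z) + norm (p t $ v - w' *v z)"
      using norm_triangle_ineq4[of "p t $ v - w' *v z" "p t $ v - w *v z"] by (simp add: norm_minus_commute)
    also have "\<dots> \<le> (2 * C) * exp (- \<kappa> * t)"
      using conv[OF assms(3) \<open>t \<ge> 0\<close>] conv[OF assms(4) \<open>t \<ge> 0\<close>] by simp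
    finally show "norm (w *v z - w' *v z) \<le> (2 * C) * exp (- \<kappa> * t)" .
  qed
  then show ?thesis by simp
qed

context
  fixes z :: "real^'k"
  assumes walk_independent: "\<And>v w w'. walk_volt E \<rho> v r w \<Longrightarrow> walk_volt E \<rho> v r w' \<Longrightarrow> w *v z = w' *v z"
begin

lemma transported_nth: "walk_volt E \<rho> v r w \<Longrightarrow> transported z $ v = w *v z"
  unfolding transported_def using walk_independent[OF walk_to_root_some] by simp

lemma transported_edge:
  assumes "(i, j) \<in> E"
  shows "transported z $ i = \<rho> (i, j) *v (transported z $ j)"
proof -
  let ?w = "SOME w. walk_volt E \<rho> i r w"
  have "\<rho> (i, j) *v (transported z $ j) = (\<rho> (i, j) ** transpose (\<rho> (i, j))) *v (?w *v z)"
    using transported_nth[OF walk_to_root_backward[OF assms walk_to_root_some]]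
    by (simp only: matrix_vector_mul_assoc matrix_mul_assoc)
  also have "\<dots> = transported z $ i"
    using voltage_orthogonal[OF assms] transported_nth[OF walk_to_root_some]
    by (simp add: orthogonal_matrix_def)
  finally show ?thesis by simp
qed

lemma transported_fixed:
  assumes "\<theta> \<in> local_group E \<rho> i"
  shows "\<theta> *v (transported z $ i) = transported z $ i"
proof -
  let ?w = "SOME w. walk_volt E \<rho> i r w"
  have "\<theta> *v (transported z $ i) = (\<theta> ** ?w) *v z"
    using transported_nth[OF walk_to_root_some] by (simp add: matrix_vector_mul_assoc)
  also have "\<dots> = transported z $ i"
    by (rule transported_nth[OF walk_to_root_local_group[OF assms walk_to_root_some], symmetric])
  finally show ?thesis .
qed

end

end

theorem theorem4:
  fixes E :: "('v::finite \<times> 'v) set"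
    and G :: "(real^'k^'k) set"
    and \<rho> :: "'v \<times> 'v \<Rightarrow> real^'k^'k"
    and a :: "'v \<Rightarrow> 'v \<Rightarrow> real"
    and p :: "real \<Rightarrow> (real^'k)^'v"
  assumes vg: "voltage_graph E G \<rho>"
    and rt: "rooted E"
    and apos: "\<And>i j. (i, j) \<in> E \<Longrightarrow> a i j > 0"
    and grp: "\<exists>r. is_root E r \<and> local_group E \<rho> r = dir_local_group E \<rho> r"
    and ode: "\<And>t. t \<ge> 0 \<Longrightarrow>
                (p has_vector_derivative clustering_field E \<rho> a (p t)) (at t within {0..})"
  shows "\<exists>pstar :: (real^'k)^'v.
           (\<exists>C c. c > 0 \<and> (\<forall>t\<ge>0. norm (p t - pstar) \<le> C * exp (- c * t)))
         \<and> (\<forall>i j. (i, j) \<in> E \<longrightarrow> pstar $ i = \<rho> (i, j) *v (pstar $ j))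
         \<and> (\<forall>i j. norm (pstar $ i) = norm (pstar $ j))
         \<and> (\<forall>i. \<forall>\<theta>\<in>local_group E \<rho> i. \<theta> *v (pstar $ i) = pstar $ i)"
proof -
  obtain r where "is_root E r" "local_group E \<rho> r = dir_local_group E \<rho> r" using grp by blast
  then interpret rooted_voltage_graph E G \<rho> r
    using vg unfolding voltage_graph_def by unfold_locales auto
  obtain z C \<kappa> where "\<kappa> > 0" and conv:
    "\<And>v w t. walk_volt E \<rho> v r w \<Longrightarrow> t \<ge> 0 \<Longrightarrow> norm (p t $ v - w *v z) \<le> C * exp (- \<kappa> * t)"
    using clustering_converges_along_walks[OF apos ode] by blast
  note walk_independent = walk_independent_if_exp_convergent[OF \<open>\<kappa> > 0\<close> conv]
  show ?thesis
  proof (intro exI conjI allI impI ballI)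
    show "\<kappa> > 0" by fact
    show "norm (p t - transported z) \<le> (real CARD('v) * C) * exp (- \<kappa> * t)" if "t \<ge> 0" for t
      using norm_diff_transported_le[OF conv[OF _ that]] by (simp add: mult.assoc)
    show "transported z $ i = \<rho> (i, j) *v (transported z $ j)" if "(i, j) \<in> E" for i j
      by (rule transported_edge[OF walk_independent that])
    show "norm (transported z $ i) = norm (transported z $ j)" for i j
      by (simp add: norm_transported)
    show "\<theta> *v (transported z $ i) = transported z $ i" if "\<theta> \<in> local_group E \<rho> i" for i \<theta>
      by (rule transported_fixed[OF walk_independent that])
  qed
qed

end
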